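(* Let $(\mathcal F,d)$ be a metric space, $\gamma\in(0,\infty]$, and $\Sigma=(\Sigma_M)_{M\in\mathbb N}$ a sequence of non-empty subsets of $\mathcal F$ which is $\gamma$-encodable in $(\mathcal F,d)$ (if $\gamma=\infty$: $\infty$-encodable). Then for every non-empty $\mathcal C\subset\mathcal F$, $$\min(\gamma^*(\mathcal C|\Sigma),\gamma)\le\gamma^*_e(\mathcal C).$$
   Context: Approximation speed: $\gamma^*(\mathcal C|\Sigma)=\sup\{\gamma\in\mathbb R:\sup_{f\in\mathcal C}\inf_{\Phi\in\Sigma_M}d(f,\Phi)=O(M^{-\gamma})\text{ as }M\to\infty\}\in[-\infty,\infty]$ ($\sup\emptyset=-\infty$). A finite $X\subset\mathcal C$ is an $\varepsilon$-covering of $\mathcal C$ if every point of $\mathcal C$ is within distance $\varepsilon$ of some point of $X$; $N(\mathcal C,d,\varepsilon)$ is the minimal size of an $\varepsilon$-covering ($+\infty$ if none), $H(\mathcal C,d,\varepsilon)=\log_2N(\mathcal C,d,\varepsilon)$, and the encoding speed is $\gamma^*_e(\mathcal C)=\sup\{\gamma>0:H(\mathcal C,d,\varepsilon)=O(\varepsilon^{-1/\gamma})\text{ as }\varepsilon\to0\}$ ($=0$ if the set is empty). For $\gamma,h>0$, a sequence $(\Sigma(\gamma,h)_M)_M$ is a $(\gamma,h)$-encoding of $\Sigma$ if there exist $c_1,c_2>0$ such that for every $M$, $\Sigma(\gamma,h)_M$ is a $c_1M^{-\gamma}$-covering of $\Sigma_M$ (in particular a finite subset of $\Sigma_M$) with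 $\log_2|\Sigma(\gamma,h)_M|\le c_2M^{1+h}$. $\Sigma$ is $\gamma$-encodable if it admits a $(\gamma,h)$-encoding for every $h>0$; it is $\infty$-encodable if it is $\gamma$-encodable for every $\gamma>0$. *)

theory Defs
  imports "HOL-Analysis.Analysis" "HOL-Library.Extended_Nat" "HOL-Library.Extended_Real"
begin

text \<open>The metric space (F,d) is a type of class metric_space with d = dist.
  Sequences indexed by M in N = {1,2,...} are functions nat => _, with index 0 ignored.\<close>

definition approx_speed :: "'a::metric_space set \<Rightarrow> (nat \<Rightarrow> 'a set) \<Rightarrow> ereal" where
  "approx_speed C \<Sigma> = Sup (ereal ` {g::real. \<exists>c::real. eventually (\<lambda>M.
       (\<forall>f\<in>C. infdist f (\<Sigma> M) \<le> c * real M powr (-g))) sequentially})"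

definition is_covering :: "'a::metric_space set \<Rightarrow> real \<Rightarrow> 'a set \<Rightarrow> bool" where
  "is_covering C \<epsilon> X \<longleftrightarrow> finite X \<and> X \<subseteq> C \<and> (\<forall>y\<in>C. \<exists>x\<in>X. dist y x \<le> \<epsilon>)"

definition covering_number :: "'a::metric_space set \<Rightarrow> real \<Rightarrow> enat" where
  "covering_number C \<epsilon> = Inf {enat (card X) | X. is_covering C \<epsilon> X}"

definition metric_entropy :: "'a::metric_space set \<Rightarrow> real \<Rightarrow> ereal" where
  "metric_entropy C \<epsilon> = (case covering_number C \<epsilon> of
       enat n \<Rightarrow> ereal (log 2 (real n)) | \<infinity> \<Rightarrow> \<infinity>)"

definition encoding_speed :: "'a::metric_space set \<Rightarrow> ereal" where
  "encoding_speed C = (let S = {g::real. g > 0 \<and> (\<exists>c::real. eventually (\<lambda>\<epsilon>.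
        metric_entropy C \<epsilon> \<le> ereal (c * \<epsilon> powr (-1/g))) (at_right 0))}
     in if S = {} then 0 else Sup (ereal ` S))"

definition has_encoding :: "(nat \<Rightarrow> 'a::metric_space set) \<Rightarrow> real \<Rightarrow> real \<Rightarrow> bool" where
  "has_encoding \<Sigma> \<gamma> h \<longleftrightarrow> (\<exists>E::nat \<Rightarrow> 'a set. \<exists>c1 c2::real. c1 > 0 \<and> c2 > 0 \<and>
     (\<forall>M\<ge>1. is_covering (\<Sigma> M) (c1 * real M powr (-\<gamma>)) (E M) \<and>
             log 2 (real (card (E M))) \<le> c2 * real M powr (1 + h)))"

definition gamma_encodable :: "(nat \<Rightarrow> 'a::metric_space set) \<Rightarrow> real \<Rightarrow> bool" where
  "gamma_encodable \<Sigma> \<gamma> \<longleftrightarrow> (\<forall>h>0. has_encoding \<Sigma> \<gamma> h)"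

definition encodable :: "(nat \<Rightarrow> 'a::metric_space set) \<Rightarrow> ereal \<Rightarrow> bool" where
  "encodable \<Sigma> \<gamma> \<longleftrightarrow> (if \<gamma> = \<infinity> then (\<forall>g>0. gamma_encodable \<Sigma> g)
                        else gamma_encodable \<Sigma> (real_of_ereal \<gamma>))"

end

theory Submission
  imports Defs
begin

text \<open>Let \<open>g < min(\<gamma>\<^sup>*(C|\<Sigma>), \<gamma>)\<close>. Every \<open>f \<in> C\<close> is within \<open>O(M\<^sup>-\<^sup>g)\<close> of \<open>\<Sigma>\<^sub>M\<close>, and
  every point of \<open>\<Sigma>\<^sub>M\<close> is within \<open>O(M\<^sup>-\<^sup>g)\<close> of the finite set \<open>\<Sigma>(\<gamma>,h)\<^sub>M\<close> of the encoding,
  so this set of at most \<open>2\<^bsup>c M\<^sup>1\<^sup>+\<^sup>h\<^esup>\<close> points also covers \<open>C\<close> at scale \<open>O(M\<^sup>-\<^sup>g)\<close>.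
  Taking \<open>M \<approx> \<epsilon>\<^sup>-\<^sup>1\<^sup>/\<^sup>g\<close> gives \<open>H(C,\<epsilon>) = O(\<epsilon>\<^sup>-\<^sup>(\<^sup>1\<^sup>+\<^sup>h\<^sup>)\<^sup>/\<^sup>g)\<close>, i.e. encoding speed
  at least \<open>g/(1+h)\<close>; now let \<open>g\<close> increase to \<open>min(\<gamma>\<^sup>*(C|\<Sigma>), \<gamma>)\<close> and \<open>h\<close> decrease to \<open>0\<close>.\<close>

lemma covering_number_le_card:
  "is_covering C \<epsilon> X \<Longrightarrow> covering_number C \<epsilon> \<le> enat (card X)"
  unfolding covering_number_def by (rule Inf_lower) blast

lemma is_covering_mono:
  "is_covering C \<epsilon> X \<Longrightarrow> \<epsilon> \<le> \<epsilon>' \<Longrightarrow> is_covering C \<epsilon>' X"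
  unfolding is_covering_def by force

lemma covering_number_antimono:
  assumes "\<epsilon> \<le> \<epsilon>'"
  shows "covering_number C \<epsilon>' \<le> covering_number C \<epsilon>"
  unfolding covering_number_def
  by (rule Inf_superset_mono) (use is_covering_mono assms in blast)

lemma metric_entropy_le_log:
  assumes "covering_number C \<epsilon> \<le> enat n"
  shows "metric_entropy C \<epsilon> \<le> ereal (log 2 (real n))"
proof -
  obtain m where m: "covering_number C \<epsilon> = enat m" "m \<le> n"
    using assms by (cases "covering_number C \<epsilon>") auto
  have "log 2 (real m) \<le> log 2 (real n)"
  proof (cases "m = 0")
    case True
    then show ?thesis by (cases "n = 0") (auto simp: log_def intro: divide_nonneg_pos)
  next
    case False
    then show ?thesis using m(2) by simp
  qed
  then show ?thesis
    unfolding metric_entropy_def m(1) by simp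
qed

lemma metric_entropy_antimono:
  assumes "\<epsilon> \<le> \<epsilon>'"
  shows "metric_entropy C \<epsilon>' \<le> metric_entropy C \<epsilon>"
proof (cases "covering_number C \<epsilon>")
  case (enat n)
  then show ?thesis
    using metric_entropy_le_log covering_number_antimono[OF assms, of C]
    by (simp add: metric_entropy_def)
next
  case infinity
  then show ?thesis by (simp add: metric_entropy_def)
qed

lemma covering_number_le_card_external:
  fixes C :: "'a::metric_space set"
  assumes "finite E" and near: "\<forall>f\<in>C. \<exists>e\<in>E. dist f e \<le> r"
  shows "covering_number C (2 * r) \<le> enat (card E)"
proof -
  define E' where "E' = {e\<in>E. \<exists>f\<in>C. dist f e \<le> r}"
  \<comment> \<open>move every centre that is useful at all to a point of \<open>C\<close>, at the cost of doubling the radius\<close>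
  define p where "p e = (SOME f. f \<in> C \<and> dist f e \<le> r)" for e
  have p: "p e \<in> C" "dist (p e) e \<le> r" if "e \<in> E'" for e
    using someI_ex[of "\<lambda>f. f \<in> C \<and> dist f e \<le> r"] that by (auto simp: E'_def p_def)
  have "finite E'" "E' \<subseteq> E"
    using \<open>finite E\<close> by (auto simp: E'_def)
  have "is_covering C (2 * r) (p ` E')"
    unfolding is_covering_def
  proof (intro conjI ballI)
    show "finite (p ` E')" "p ` E' \<subseteq> C"
      using \<open>finite E'\<close> p by auto
  next
    fix y assume "y \<in> C"
    then obtain e where "e \<in> E" "dist y e \<le> r"
      using near by blast
    with \<open>y \<in> C\<close> have "e \<in> E'"
      by (auto simp: E'_def)
    have "dist y (p e) \<le> dist y e + dist (p e) e"
      using dist_triangle[of y "p e" e] by (simp add: dist_commute)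
    with p[OF \<open>e \<in> E'\<close>] \<open>dist y e \<le> r\<close> \<open>e \<in> E'\<close>
    show "\<exists>x\<in>p ` E'. dist y x \<le> 2 * r"
      by force
  qed
  then have "covering_number C (2 * r) \<le> enat (card (p ` E'))"
    by (rule covering_number_le_card)
  also have "card (p ` E') \<le> card E"
    using card_image_le[OF \<open>finite E'\<close>, of p] card_mono[OF \<open>finite E\<close> \<open>E' \<subseteq> E\<close>]
    by linarith
  finally show ?thesis
    by simp
qed

lemma infdist_le_infdist_add:
  assumes "S \<noteq> {}" "\<forall>\<phi>\<in>S. infdist \<phi> E \<le> b"
  shows "infdist f E \<le> infdist f S + b"
proof -
  have "infdist f E - b \<le> dist f \<phi>" if "\<phi> \<in> S" for \<phi>
    using infdist_triangle[of f E \<phi>] assms(2) that by auto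
  then have "infdist f E - b \<le> (INF \<phi>\<in>S. dist f \<phi>)"
    using assms(1) by (intro cINF_greatest) auto
  then show ?thesis
    using infdist_notempty[OF assms(1)] by simp
qed

lemma infdist_attained_finite:
  assumes "finite E" "E \<noteq> {}"
  obtains e where "e \<in> E" "dist f e = infdist f E"
proof -
  have "infdist f E = Min (dist f ` E)"
    using assms by (simp add: infdist_notempty cInf_eq_Min)
  moreover have "Min (dist f ` E) \<in> dist f ` E"
    using assms by (intro Min_in) auto
  ultimately show ?thesis
    using that by auto
qed

lemma covering_number_le_card_approx:
  fixes C :: "'a::metric_space set"
  assumes "S \<noteq> {}" "\<forall>f\<in>C. infdist f S \<le> a" "is_covering S b E"
  shows "covering_number C (2 * (a + b)) \<le> enat (card E)"
proof -
  have "finite E" "E \<noteq> {}"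
    using assms(1,3) unfolding is_covering_def by auto
  have "\<forall>\<phi>\<in>S. infdist \<phi> E \<le> b"
    using assms(3) infdist_le2 unfolding is_covering_def by blast
  then have "infdist f E \<le> a + b" if "f \<in> C" for f
    using infdist_le_infdist_add[OF assms(1)] assms(2) that by (meson add_right_mono order.trans)
  then have "\<forall>f\<in>C. \<exists>e\<in>E. dist f e \<le> a + b"
    using infdist_attained_finite[OF \<open>finite E\<close> \<open>E \<noteq> {}\<close>] by metis
  with \<open>finite E\<close> show ?thesis
    by (rule covering_number_le_card_external)
qed

lemma metric_entropy_bound_from_scales:
  fixes C :: "'a::metric_space set"
  assumes "0 < g" "0 < K" "0 \<le> s" "0 \<le> c"
    and scales: "\<And>M. M \<ge> M0 \<Longrightarrow> metric_entropy C (K * real M powr (-g)) \<le> ereal (c * real M powr s)"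
  shows "\<exists>c'. eventually (\<lambda>\<epsilon>. metric_entropy C \<epsilon> \<le> ereal (c' * \<epsilon> powr (-s/g))) (at_right 0)"
proof -
  define N where "N = real (max M0 1)"
  have "N \<ge> 1"
    by (simp add: N_def)
  define c' where "c' = c * 2 powr s * K powr (s/g)"
  have bound: "metric_entropy C \<epsilon> \<le> ereal (c' * \<epsilon> powr (-s/g))"
    if "0 < \<epsilon>" "\<epsilon> < K / N powr g" for \<epsilon>
  proof -
    define T where "T = (K/\<epsilon>) powr (1/g)"
    define M where "M = nat \<lceil>T\<rceil>"
    have "N powr g < K/\<epsilon>"
      using that \<open>N \<ge> 1\<close> by (simp add: field_simps)
    then have "(N powr g) powr (1/g) \<le> T"
      unfolding T_def using \<open>0 < g\<close> by (intro powr_mono2) auto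
    then have "N \<le> T"
      using \<open>0 < g\<close> \<open>N \<ge> 1\<close> by (simp add: powr_powr)
    moreover have "real M = of_int \<lceil>T\<rceil>"
      using \<open>N \<le> T\<close> \<open>N \<ge> 1\<close> by (simp add: M_def)
    then have "T \<le> real M" "real M < T + 1"
      by linarith+
    ultimately have M: "M \<ge> M0" "T \<le> real M" "real M \<le> 2 * T"
      using \<open>N \<ge> 1\<close> unfolding N_def by linarith+
    have "K * real M powr (-g) \<le> K * T powr (-g)"
      using M \<open>N \<le> T\<close> \<open>N \<ge> 1\<close> \<open>0 < g\<close> \<open>0 < K\<close> by (intro mult_left_mono powr_mono2') auto
    also have "K * T powr (-g) = \<epsilon>"
      unfolding T_def using \<open>0 < g\<close> \<open>0 < K\<close> \<open>0 < \<epsilon>\<close>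
      by (simp add: powr_powr powr_minus_divide powr_divide)
    finally have "metric_entropy C \<epsilon> \<le> ereal (c * real M powr s)"
      using metric_entropy_antimono scales[OF M(1)] order.trans by blast
    also have "c * real M powr s \<le> c * (2 * T) powr s"
      using M \<open>0 \<le> s\<close> \<open>0 \<le> c\<close> by (intro mult_left_mono powr_mono2) auto
    also have "c * (2 * T) powr s = c' * \<epsilon> powr (-s/g)"
      unfolding T_def c'_def using \<open>0 < g\<close> \<open>0 < K\<close> \<open>0 < \<epsilon>\<close>
      by (simp add: powr_mult powr_powr powr_divide powr_minus_divide)
    finally show ?thesis
      by simp
  qed
  have "K / N powr g > 0"
    using \<open>0 < K\<close> \<open>N \<ge> 1\<close> by simp
  then have "eventually (\<lambda>\<epsilon>. metric_entropy C \<epsilon> \<le> ereal (c' * \<epsilon> powr (-s/g))) (at_right 0)"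
    by (rule eventually_at_right_real[THEN eventually_mono]) (use bound in auto)
  then show ?thesis ..
qed

lemma metric_entropy_bound_of_approx_encoding:
  fixes \<Sigma> :: "nat \<Rightarrow> 'a::metric_space set"
  assumes "0 < g" "g \<le> g'" "g \<le> \<gamma>" "0 \<le> h"
    and nonempty: "\<And>M. M \<ge> 1 \<Longrightarrow> \<Sigma> M \<noteq> {}"
    and approx: "eventually (\<lambda>M. \<forall>f\<in>C. infdist f (\<Sigma> M) \<le> c * real M powr (-g')) sequentially"
    and "has_encoding \<Sigma> \<gamma> h"
  shows "\<exists>c'. eventually (\<lambda>\<epsilon>. metric_entropy C \<epsilon> \<le> ereal (c' * \<epsilon> powr (-(1 + h)/g))) (at_right 0)"
proof -
  obtain E c1 c2 where "0 < c1" "0 < c2"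
    and encoding: "\<And>M. M \<ge> 1 \<Longrightarrow> is_covering (\<Sigma> M) (c1 * real M powr (-\<gamma>)) (E M) \<and>
                                log 2 (real (card (E M))) \<le> c2 * real M powr (1 + h)"
    using \<open>has_encoding \<Sigma> \<gamma> h\<close> unfolding has_encoding_def by blast
  obtain M0 where M0: "\<And>M. M \<ge> M0 \<Longrightarrow> \<forall>f\<in>C. infdist f (\<Sigma> M) \<le> c * real M powr (-g')"
    using approx unfolding eventually_sequentially by blast
  define K where "K = 2 * (\<bar>c\<bar> + c1)"
  have "metric_entropy C (K * real M powr (-g)) \<le> ereal (c2 * real M powr (1 + h))"
    if "M \<ge> max M0 1" for M
  proof -
    have "real M \<ge> 1"
      using that by simp
    then have decay: "real M powr (-g') \<le> real M powr (-g)" "real M powr (-\<gamma>) \<le> real M powr (-g)"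
      using assms(2,3) by (auto intro: powr_mono)
    have "c * real M powr (-g') \<le> \<bar>c\<bar> * real M powr (-g)"
      using decay(1) by (metis abs_ge_self abs_ge_zero order.trans mult_left_mono mult_right_mono powr_ge_zero)
    then have "\<forall>f\<in>C. infdist f (\<Sigma> M) \<le> \<bar>c\<bar> * real M powr (-g)"
      using M0 that by force
    moreover have "is_covering (\<Sigma> M) (c1 * real M powr (-g)) (E M)"
      using encoding[of M] that decay(2) \<open>0 < c1\<close> by (auto intro: is_covering_mono)
    ultimately have "covering_number C (2 * (\<bar>c\<bar> * real M powr (-g) + c1 * real M powr (-g)))
        \<le> enat (card (E M))"
      using nonempty that by (intro covering_number_le_card_approx) auto
    also have "2 * (\<bar>c\<bar> * real M powr (-g) + c1 * real M powr (-g)) = K * real M powr (-g)"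
      by (simp add: K_def algebra_simps)
    finally have "covering_number C (K * real M powr (-g)) \<le> enat (card (E M))" .
    then have "metric_entropy C (K * real M powr (-g)) \<le> ereal (log 2 (real (card (E M))))"
      by (rule metric_entropy_le_log)
    also have "\<dots> \<le> ereal (c2 * real M powr (1 + h))"
      using encoding[of M] that by simp
    finally show ?thesis .
  qed
  moreover have "0 < K"
    using \<open>0 < c1\<close> by (simp add: K_def)
  ultimately show ?thesis
    using \<open>0 < g\<close> \<open>0 \<le> h\<close> \<open>0 < c2\<close>
    by (intro metric_entropy_bound_from_scales[of g K "1 + h" c2 "max M0 1" C]) auto
qed

lemma encoding_speed_nonneg: "0 \<le> encoding_speed C"
proof -
  have Sup_nonneg: "0 \<le> Sup (ereal ` S)" if "g \<in> S" "\<forall>g\<in>S. 0 < g" for S and g :: real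
  proof -
    have "0 \<le> ereal g"
      using that by (simp add: less_imp_le)
    also have "\<dots> \<le> Sup (ereal ` S)"
      using \<open>g \<in> S\<close> by (simp add: Sup_upper)
    finally show ?thesis .
  qed
  then show ?thesis
    unfolding encoding_speed_def Let_def by (auto intro!: Sup_nonneg)
qed

lemma encoding_speed_geI:
  assumes "\<And>t. 0 < t \<Longrightarrow> ereal t < a \<Longrightarrow>
             \<exists>c. eventually (\<lambda>\<epsilon>. metric_entropy C \<epsilon> \<le> ereal (c * \<epsilon> powr (-1/t))) (at_right 0)"
  shows "a \<le> encoding_speed C"
proof (rule dense_le)
  fix y assume "y < a"
  show "y \<le> encoding_speed C"
  proof (cases "y \<le> 0")
    case True
    then show ?thesis
      using encoding_speed_nonneg order.trans by blast
  next
    case False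
    with \<open>y < a\<close> obtain t where "y = ereal t" "0 < t"
      by (cases y) auto
    with \<open>y < a\<close> assms show ?thesis
      unfolding encoding_speed_def Let_def by (auto intro!: Sup_upper)
  qed
qed

lemma less_approx_speedE:
  assumes "ereal g < approx_speed C \<Sigma>"
  obtains g' c where "g < g'"
    "eventually (\<lambda>M. \<forall>f\<in>C. infdist f (\<Sigma> M) \<le> c * real M powr (-g')) sequentially"
  using assms that unfolding approx_speed_def by (auto simp: less_Sup_iff)

lemma encodable_gamma_encodable_ge:
  assumes "encodable \<Sigma> \<gamma>" "ereal g < \<gamma>"
  obtains \<gamma>' where "g \<le> \<gamma>'" "gamma_encodable \<Sigma> \<gamma>'"
proof (cases \<gamma>)
  case (real r)
  then show ?thesis
    using assms that[of r] unfolding encodable_def by auto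
next
  case PInf
  then show ?thesis
    using assms that[of "max g 1"] unfolding encodable_def by auto
next
  case MInf
  then show ?thesis
    using assms by simp
qed

theorem mainTheorem8:
  fixes \<Sigma> :: "nat \<Rightarrow> 'a::metric_space set" and \<gamma> :: ereal and C :: "'a set"
  assumes "\<gamma> > 0"
    and "\<And>M. M \<ge> 1 \<Longrightarrow> \<Sigma> M \<noteq> {}"
    and "encodable \<Sigma> \<gamma>"
    and "C \<noteq> {}"
  shows "min (approx_speed C \<Sigma>) \<gamma> \<le> encoding_speed C"
proof (rule encoding_speed_geI)
  fix t assume "0 < t" "ereal t < min (approx_speed C \<Sigma>) \<gamma>"
  then obtain z where "ereal t < z" "z < min (approx_speed C \<Sigma>) \<gamma>"
    using dense by blast
  then obtain g where g: "t < g" "ereal g < approx_speed C \<Sigma>" "ereal g < \<gamma>"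
    by (cases z) auto
  obtain g' c where "g < g'"
    and approx: "eventually (\<lambda>M. \<forall>f\<in>C. infdist f (\<Sigma> M) \<le> c * real M powr (-g')) sequentially"
    using less_approx_speedE[OF g(2)] .
  obtain \<gamma>' where "g \<le> \<gamma>'" "gamma_encodable \<Sigma> \<gamma>'"
    using encodable_gamma_encodable_ge[OF assms(3) g(3)] .
  define h where "h = g / t - 1"
  have "0 < h" "-(1 + h)/g = -1/t"
    using \<open>0 < t\<close> \<open>t < g\<close> by (simp_all add: h_def)
  with \<open>gamma_encodable \<Sigma> \<gamma>'\<close> have "has_encoding \<Sigma> \<gamma>' h"
    unfolding gamma_encodable_def by blast
  from metric_entropy_bound_of_approx_encoding[OF _ _ \<open>g \<le> \<gamma>'\<close> _ assms(2) approx this]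
  show "\<exists>c. eventually (\<lambda>\<epsilon>. metric_entropy C \<epsilon> \<le> ereal (c * \<epsilon> powr (-1/t))) (at_right 0)"
    using \<open>0 < t\<close> \<open>t < g\<close> \<open>g < g'\<close> \<open>0 < h\<close> \<open>-(1 + h)/g = -1/t\<close> by simp
qed

end
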